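(* Let $(\mathcal{M},\mathcal{L})$ be a regular symplectic pair with $\mathcal{M},\mathcal{L}\in\mathbb{C}^{2n\times2n}$. If $\mathcal{M}=\mathcal{L}W$ for some nonsingular $W\in\mathbb{C}^{2n\times2n}$, then both $\mathcal{M}$ and $\mathcal{L}$ are invertible.
   Context: $\mathcal{J}=\begin{bmatrix}0&I_n\\-I_n&0\end{bmatrix}$. The pair $(\mathcal{M},\mathcal{L})$ is symplectic if $\mathcal{M}\mathcal{J}\mathcal{M}^H=\mathcal{L}\mathcal{J}\mathcal{L}^H$ and regular if $\det(\mathcal{M}-\lambda\mathcal{L})\ne0$ for some $\lambda\in\mathbb{C}$. *)

theory Defs
  imports "HOL-Analysis.Analysis"
begin

text \<open>Square matrices of size 2n are indexed by the sum type 'n + 'n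
  (first block = Inl indices, second block = Inr indices), with n = CARD('n).\<close>

definition conj_transpose :: "complex^'m^'k \<Rightarrow> complex^'k^'m" where
  "conj_transpose A = (\<chi> i j. cnj (A $ j $ i))"

definition symplJ :: "complex^('n::finite + 'n)^('n + 'n)" where
  "symplJ = (\<chi> i j. (case (i, j) of
      (Inl a, Inr b) \<Rightarrow> (if a = b then 1 else 0)
    | (Inr a, Inl b) \<Rightarrow> (if a = b then -1 else 0)
    | _ \<Rightarrow> 0))"

definition symplectic_pair :: "complex^('n::finite + 'n)^('n + 'n) \<Rightarrow> complex^('n + 'n)^('n + 'n) \<Rightarrow> bool" where
  "symplectic_pair M L \<longleftrightarrow> M ** symplJ ** conj_transpose M = L ** symplJ ** conj_transpose L"

definition regular_pair :: "complex^'m^'m \<Rightarrow> complex^'m^'m \<Rightarrow> bool" where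
  "regular_pair M L \<longleftrightarrow> (\<exists>z::complex. det (M - (\<chi> i j. z * L $ i $ j)) \<noteq> 0)"

end

theory Submission
  imports Defs
begin

text \<open>If \<open>M = L W\<close>, the pencil factors as \<open>M - z L = L (W - z I)\<close>, so
  \<open>det (M - z L) = det L \<cdot> det (W - z I)\<close>. Regularity gives a \<open>z\<close> where this
  is nonzero, hence \<open>det L \<noteq> 0\<close>; then \<open>M = L W\<close> is a product of invertible
  matrices.\<close>

lemma matrix_mul_mat:
  fixes A :: "'a::comm_semiring_1^'n^'m"
  shows "A ** mat c = (\<chi> i j. c * A $ i $ j)"
  unfolding matrix_matrix_mult_def mat_def
  by (auto simp: vec_eq_iff if_distrib if_distribR sum.delta'[OF finite] mult.commute
      cong: if_cong)

lemma matrix_diff_ldistrib: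
  fixes A :: "'a::ring_1^'n^'m"
  shows "A ** (B - C) = A ** B - A ** C"
  by (simp add: vec_eq_iff matrix_matrix_mult_def sum_subtractf[symmetric] right_diff_distrib)

lemma pencil_left_factor:
  fixes L W :: "'a::comm_ring_1^'n^'n"
  shows "L ** W - (\<chi> i j. z * L $ i $ j) = L ** (W - mat z)"
  by (simp add: matrix_diff_ldistrib matrix_mul_mat)

lemma regular_pair_right_multiple_invertible:
  fixes L W :: "complex^'n^'n"
  assumes "regular_pair (L ** W) L"
  shows "invertible L"
proof -
  obtain z where "det (L ** W - (\<chi> i j. z * L $ i $ j)) \<noteq> 0"
    using assms unfolding regular_pair_def by blast
  then have "det L * det (W - mat z) \<noteq> 0"
    by (simp add: pencil_left_factor det_mul)
  then show ?thesis
    by (simp add: invertible_det_nz)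
qed

theorem lemma2p5:
  fixes M L W :: "complex^('n::finite + 'n)^('n + 'n)"
  assumes "regular_pair M L"
    and "symplectic_pair M L"
    and "invertible W"
    and "M = L ** W"
  shows "invertible M \<and> invertible L"
proof -
  have "invertible L"
    using assms(1,4) regular_pair_right_multiple_invertible by blast
  moreover have "invertible M"
    using \<open>invertible L\<close> assms(3,4) invertible_mult by blast
  ultimately show ?thesis by simp
qed

end
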